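(* Suppose $U$ satisfies the Main Assumption and $\mu$ is strictly increasing in its $i$-th argument for some index $i$ (i.e. $\mu(\lambda+te_i)>\mu(\lambda)$ for all $\lambda\in\mathbb{R}^n_+$, $t>0$). Then for every extremal of problem (P) whose representation in Theorem 1 has $A_i=0$, we have $x_i\equiv y_i\equiv0$ (regardless of whether $\gamma=0$ or not).
   Context: Setting of Theorem 1: problem (P) on $\mathbb{H}_{2n+1}$ of minimizing $T$ over Lipschitz curves $(x,y,z)$ with $(x,y,z)(0)=0$, $(\dot x,\dot y)\in U$ a.e., $\dot z=\frac12\sum_i(x_i\dot y_i-\dot x_iy_i)$; extremal = projection of a Pontryagin maximum principle solution. Main Assumption: $U=\{(\dot x,\dot y):\mu(\mu_{\Omega_1}(\dot x_1,\dot y_1),\dots,\mu_{\Omega_n}(\dot x_n,\dot y_n))\le1\}$ with $\Omega_i\subset\mathbb{R}^2$ compact convex, $0\in\operatorname{int}\Omega_i$, $\mu_\Omega$ the Minkowski functional, and $\mu:\mathbb{R}^n_+\to\mathbb{R}_+$ continuous, convex, positively homogeneous, nondecreasing in each argument, positive outside $0$. Theorem 1 associates to each extremal constants $\gamma\in\{0,\pm1\}$, $A\in\mathbb{R}^n_+$ not both zero, with $A_i=s_{\Omega_i}(h_i,g_i)$ where $h_i=\varphi_i-\frac12\gamma y_i$, $g_i=\psi_i+\frac12\gamma x_i$ are built from the PMP covector $(\varphi,\psi,\gamma)$, and a measurable $\lambda(t)\in\arg\max_{\lambda\in\Xi}\sum_jA_j\lambda_j$, $\Xi=\{\lambda\in\mathbb{R}^n_+:\mu(\lambda)\le1\}$,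 with $\mu_{\Omega_i}(\dot x_i,\dot y_i)=\lambda_i(t)$. *)

theory Defs
  imports "HOL-Analysis.Analysis"
begin

text \<open>Nonnegative orthant R^n_+ (index type 'n plays the role of {1..n}).\<close>
definition nonneg_orthant :: "(real^'n) set" where
  "nonneg_orthant = {l. \<forall>j. 0 \<le> l $ j}"

definition minkowski_fun :: "(real \<times> real) set \<Rightarrow> real \<times> real \<Rightarrow> real" where
  "minkowski_fun \<Omega> w = Inf {r. 0 < r \<and> w \<in> (\<lambda>p. r *\<^sub>R p) ` \<Omega>}"

definition support_fun :: "(real \<times> real) set \<Rightarrow> real \<times> real \<Rightarrow> real" where
  "support_fun \<Omega> v = (SUP p\<in>\<Omega>. v \<bullet> p)"

definition main_assumption :: "('n \<Rightarrow> (real \<times> real) set) \<Rightarrow> (real^'n \<Rightarrow> real) \<Rightarrow> bool" where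
  "main_assumption \<Omega> \<mu> \<longleftrightarrow>
     (\<forall>j. compact (\<Omega> j) \<and> convex (\<Omega> j) \<and> (0::real\<times>real) \<in> interior (\<Omega> j)) \<and>
     continuous_on nonneg_orthant \<mu> \<and>
     convex_on nonneg_orthant \<mu> \<and>
     (\<forall>l\<in>nonneg_orthant. 0 \<le> \<mu> l) \<and>
     (\<forall>l\<in>nonneg_orthant. \<forall>t\<ge>0. \<mu> (t *\<^sub>R l) = t * \<mu> l) \<and>
     (\<forall>l\<in>nonneg_orthant. \<forall>j. \<forall>t\<ge>0. \<mu> l \<le> \<mu> (l + t *\<^sub>R axis j 1)) \<and>
     (\<forall>l\<in>nonneg_orthant. l \<noteq> 0 \<longrightarrow> 0 < \<mu> l)"

definition control_set :: "('n \<Rightarrow> (real \<times> real) set) \<Rightarrow> (real^'n \<Rightarrow> real) \<Rightarrow> ((real^'n) \<times> (real^'n)) set" where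
  "control_set \<Omega> \<mu> = {(a, b). \<mu> (\<chi> j. minkowski_fun (\<Omega> j) (a $ j, b $ j)) \<le> 1}"

definition admissible :: "('n \<Rightarrow> (real \<times> real) set) \<Rightarrow> (real^'n \<Rightarrow> real) \<Rightarrow> real
    \<Rightarrow> (real \<Rightarrow> real^'n) \<Rightarrow> (real \<Rightarrow> real^'n) \<Rightarrow> (real \<Rightarrow> real) \<Rightarrow> bool" where
  "admissible \<Omega> \<mu> T x y z \<longleftrightarrow>
     0 \<le> T \<and>
     (\<exists>L. L-lipschitz_on {0..T} x) \<and> (\<exists>L. L-lipschitz_on {0..T} y) \<and> (\<exists>L. L-lipschitz_on {0..T} z) \<and>
     x 0 = 0 \<and> y 0 = 0 \<and> z 0 = 0 \<and>
     (AE t in lebesgue. t \<in> {0..T} \<longrightarrow>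
        x differentiable (at t within {0..T}) \<and>
        y differentiable (at t within {0..T}) \<and>
        z differentiable (at t within {0..T}) \<and>
        (vector_derivative x (at t within {0..T}), vector_derivative y (at t within {0..T}))
           \<in> control_set \<Omega> \<mu> \<and>
        vector_derivative z (at t within {0..T}) =
           (1/2) * (\<Sum>j\<in>UNIV. x t $ j * vector_derivative y (at t within {0..T}) $ j
                               - vector_derivative x (at t within {0..T}) $ j * y t $ j))"

definition hamiltonian :: "real^'n \<Rightarrow> real^'n \<Rightarrow> real \<Rightarrow> real^'n \<Rightarrow> real^'n \<Rightarrow> real^'n \<Rightarrow> real^'n \<Rightarrow> real" where
  "hamiltonian \<phi> \<psi> \<gamma> x y a b =
     \<phi> \<bullet> a + \<psi> \<bullet> b + \<gamma> * ((1/2) * (\<Sum>j\<in>UNIV. x $ j * b $ j - a $ j * y $ j))"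

text \<open>Solution of the Pontryagin maximum principle for the time-optimal problem (P):
  admissible trajectory (x,y,z) on [0,T] and a nonvanishing covector (\<phi>,\<psi>,\<gamma>);
  the z-component \<gamma> is constant since H does not depend on z.\<close>
definition pmp_solution :: "('n \<Rightarrow> (real \<times> real) set) \<Rightarrow> (real^'n \<Rightarrow> real) \<Rightarrow> real
    \<Rightarrow> (real \<Rightarrow> real^'n) \<Rightarrow> (real \<Rightarrow> real^'n) \<Rightarrow> (real \<Rightarrow> real)
    \<Rightarrow> (real \<Rightarrow> real^'n) \<Rightarrow> (real \<Rightarrow> real^'n) \<Rightarrow> real \<Rightarrow> bool" where
  "pmp_solution \<Omega> \<mu> T x y z \<phi> \<psi> \<gamma> \<longleftrightarrow>
     admissible \<Omega> \<mu> T x y z \<and>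
     (\<exists>L. L-lipschitz_on {0..T} \<phi>) \<and> (\<exists>L. L-lipschitz_on {0..T} \<psi>) \<and>
     (\<forall>t\<in>{0..T}. \<phi> t \<noteq> 0 \<or> \<psi> t \<noteq> 0 \<or> \<gamma> \<noteq> 0) \<and>
     (AE t in lebesgue. t \<in> {0..T} \<longrightarrow>
        (\<phi> has_vector_derivative (- (\<gamma>/2) *\<^sub>R vector_derivative y (at t within {0..T}))) (at t within {0..T}) \<and>
        (\<psi> has_vector_derivative ((\<gamma>/2) *\<^sub>R vector_derivative x (at t within {0..T}))) (at t within {0..T})) \<and>
     (\<exists>c\<ge>0. AE t in lebesgue. t \<in> {0..T} \<longrightarrow>
        hamiltonian (\<phi> t) (\<psi> t) \<gamma> (x t) (y t)
           (vector_derivative x (at t within {0..T})) (vector_derivative y (at t within {0..T})) = c \<and>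
        (\<forall>(a, b)\<in>control_set \<Omega> \<mu>.
           hamiltonian (\<phi> t) (\<psi> t) \<gamma> (x t) (y t) a b \<le>
           hamiltonian (\<phi> t) (\<psi> t) \<gamma> (x t) (y t)
             (vector_derivative x (at t within {0..T})) (vector_derivative y (at t within {0..T}))))"

end

theory Submission
  imports Defs
begin

text \<open>Since \<open>0\<close> is interior to \<open>\<Omega>\<^sub>i\<close>, its support function vanishes only at \<open>0\<close>, so \<open>A\<^sub>i = 0\<close> means
  \<open>\<phi>\<^sub>i = \<gamma> y\<^sub>i / 2\<close> and \<open>\<psi>\<^sub>i = - \<gamma> x\<^sub>i / 2\<close> along the extremal. If \<open>\<gamma> \<noteq> 0\<close>, comparing this with the costate
  equations \<open>\<phi>\<^sub>i' = - \<gamma> y\<^sub>i' / 2\<close>, \<open>\<psi>\<^sub>i' = \<gamma> x\<^sub>i' / 2\<close> gives \<open>x\<^sub>i' = y\<^sub>i' = 0\<close> almost everywhere. If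
  \<open>\<gamma> = 0\<close>, the optimal control maximises a nonzero linear functional that ignores the \<open>i\<close>-th
  pair; since \<open>\<mu>\<close> is strictly increasing in its \<open>i\<close>-th argument, deleting a nonzero \<open>i\<close>-th pair
  would leave an admissible control strictly inside \<open>U\<close> with the same positive value, which a
  rescaling then beats. Either way \<open>x\<^sub>i, y\<^sub>i\<close> are Lipschitz with derivative zero almost everywhere,
  hence constant, and they start at \<open>0\<close>.\<close>

lemma negligible_image_zero_derivative:
  fixes f :: "real \<Rightarrow> real"
  assumes "\<And>t. t \<in> S \<Longrightarrow> (f has_derivative (\<lambda>h. 0)) (at t within S)"
  shows "negligible (f ` S)"
proof -
  \<comment> \<open>\<open>baby_Sard\<close> is stated for maps between spaces \<open>real^'m\<close>, so pass through \<open>real^1\<close>.\<close>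
  let ?F = "\<lambda>v::real^1. vec (f (v $ 1)) :: real^1"
  have "(?F has_derivative (\<lambda>h. 0)) (at v within vec ` S)" if vS: "v \<in> vec ` S" for v
  proof -
    obtain t where t: "t \<in> S" "v = vec t" using vS by auto
    have "(f has_derivative (\<lambda>h. h * 0)) (at t within S)" using assms[OF t(1)] by simp
    moreover have "((*\<^sub>R) (0::real) :: real^1 \<Rightarrow> real^1) = (\<lambda>h. 0)" by auto
    ultimately show ?thesis using has_derivative_vector_1 t by metis
  qed
  then have "negligible (?F ` vec ` S)"
    by (intro baby_Sard[where f' = "\<lambda>_ _. 0"]) (auto simp: matrix_eq rank_eq_0)
  then have "negligible ((\<lambda>v::real^1. v $ 1) ` ?F ` vec ` S)"
    by (rule negligible_differentiable_image_negligible[rotated])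
      (auto intro: bounded_linear_imp_differentiable_on[OF bounded_linear_vec_nth])
  moreover have "(\<lambda>v::real^1. v $ 1) ` ?F ` vec ` S = f ` S"
    by (auto simp: image_image)
  ultimately show ?thesis by simp
qed

text \<open>The image of the exceptional null set is null because Lipschitz maps preserve null sets, the
  image of the rest is null by Sard, and a connected null subset of the line is a point.\<close>

lemma lipschitz_zero_derivative_ae_imp_constant:
  fixes f :: "real \<Rightarrow> real"
  assumes L: "L-lipschitz_on S f" and "connected S" and N: "negligible N"
    and d: "\<And>t. t \<in> S - N \<Longrightarrow> (f has_derivative (\<lambda>h. 0)) (at t within S)"
    and "s \<in> S" "t \<in> S"
  shows "f s = f t"
proof (rule ccontr)
  assume ne: "f s \<noteq> f t"
  have "negligible (f ` (S - N))"
    by (rule negligible_image_zero_derivative) (use d in \<open>auto intro: has_derivative_subset\<close>)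
  moreover have "negligible (f ` (S \<inter> N))"
  proof (rule negligible_locally_Lipschitz_image)
    show "negligible (S \<inter> N)" using N by (rule negligible_subset) auto
    show "\<exists>U B. open U \<and> x \<in> U \<and> (\<forall>y\<in>S \<inter> N \<inter> U. norm (f y - f x) \<le> B * norm (y - x))"
      if "x \<in> S \<inter> N" for x
      using that lipschitz_on_normD[OF L] by (intro exI[of _ UNIV] exI[of _ L]) auto
  qed simp
  moreover have "f ` S = f ` (S - N) \<union> f ` (S \<inter> N)" by auto
  ultimately have "negligible (f ` S)" by (metis negligible_Un)
  moreover have "connected (f ` S)"
    using \<open>connected S\<close> lipschitz_on_continuous_on[OF L] by (rule connected_continuous_image[rotated])
  then have "{min (f s) (f t)..max (f s) (f t)} \<subseteq> f ` S"
    using connected_contains_Icc[of "f ` S"] \<open>s \<in> S\<close> \<open>t \<in> S\<close>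
    by (cases "f s \<le> f t") (simp_all add: min_def max_def)
  ultimately have "negligible (cbox (min (f s) (f t)) (max (f s) (f t)))"
    by (simp add: cbox_interval negligible_subset)
  then have "box (min (f s) (f t)) (max (f s) (f t)) = {}"
    by (simp only: negligible_interval)
  then show False
    using ne by (simp add: box_real min_def max_def split: if_splits)
qed

lemma lipschitz_on_vec_nth:
  fixes x :: "'a::metric_space \<Rightarrow> real^'n"
  assumes "L-lipschitz_on S x"
  shows "L-lipschitz_on S (\<lambda>s. x s $ i)"
proof (rule lipschitz_onI)
  show "0 \<le> L" using lipschitz_on_nonneg[OF assms] .
  show "dist (x s $ i) (x t $ i) \<le> L * dist s t" if "s \<in> S" "t \<in> S" for s t
    using lipschitz_onD[OF assms that] dist_vec_nth_le order_trans by metis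
qed

lemma has_vector_derivative_vec_nth:
  "(f has_vector_derivative f') F \<Longrightarrow> ((\<lambda>x. f x $ i) has_vector_derivative f' $ i) F"
  by (rule bounded_linear.has_vector_derivative[OF bounded_linear_vec_nth])

lemma lipschitz_component_zero_derivative_ae_imp_constant:
  fixes x :: "real \<Rightarrow> real^'n"
  assumes L: "L-lipschitz_on S x" and "connected S" and "negligible N"
    and d: "\<And>t. t \<in> S - N \<Longrightarrow>
      x differentiable (at t within S) \<and> vector_derivative x (at t within S) $ i = 0"
    and "s \<in> S" "t \<in> S"
  shows "x s $ i = x t $ i"
proof (rule lipschitz_zero_derivative_ae_imp_constant[OF lipschitz_on_vec_nth[OF L]])
  fix u assume u: "u \<in> S - N"
  then have "(x has_vector_derivative vector_derivative x (at u within S)) (at u within S)"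
    using d vector_derivative_works by blast
  from has_vector_derivative_vec_nth[OF this, of i] d[OF u]
  show "((\<lambda>s. x s $ i) has_derivative (\<lambda>h. 0)) (at u within S)"
    by (simp add: has_vector_derivative_def)
qed (use assms in auto)

lemma absorbing_if_zero_in_interior:
  assumes "(0::real\<times>real) \<in> interior \<Omega>"
  shows "\<exists>r>0. w \<in> (\<lambda>p. r *\<^sub>R p) ` \<Omega>"
proof -
  obtain e where e: "e > 0" "cball 0 e \<subseteq> \<Omega>" using assms mem_interior_cball by blast
  define r where "r = (norm w + 1) / e"
  have r: "r > 0" using e by (simp add: r_def add_nonneg_pos)
  have "e * norm w \<le> e * (1 + norm w)" using e by simp
  then have "norm ((1/r) *\<^sub>R w) \<le> e"
    using e by (simp add: r_def divide_le_eq add_nonneg_pos)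
  then have "(1/r) *\<^sub>R w \<in> \<Omega>" using e by auto
  moreover have "w = r *\<^sub>R ((1/r) *\<^sub>R w)" using r by simp
  ultimately show ?thesis using r by blast
qed

lemma minkowski_fun_nonneg:
  assumes "(0::real\<times>real) \<in> interior \<Omega>"
  shows "0 \<le> minkowski_fun \<Omega> w"
  unfolding minkowski_fun_def
  by (rule cInf_greatest) (use absorbing_if_zero_in_interior[OF assms] in auto)

lemma minkowski_fun_zero:
  assumes "(0::real\<times>real) \<in> interior \<Omega>"
  shows "minkowski_fun \<Omega> 0 = 0"
proof -
  have "0 \<in> \<Omega>" using assms interior_subset by blast
  then have "{r. 0 < r \<and> (0::real\<times>real) \<in> (\<lambda>p. r *\<^sub>R p) ` \<Omega>} = {0<..}"
    by (auto intro!: image_eqI[where x=0])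
  then show ?thesis unfolding minkowski_fun_def by simp
qed

lemma minkowski_fun_pos:
  assumes "(0::real\<times>real) \<in> interior \<Omega>" "bounded \<Omega>" "w \<noteq> 0"
  shows "0 < minkowski_fun \<Omega> w"
proof -
  obtain B where B: "B > 0" "\<And>p. p \<in> \<Omega> \<Longrightarrow> norm p \<le> B"
    using assms(2) bounded_pos by blast
  have "norm w / B \<le> minkowski_fun \<Omega> w"
    unfolding minkowski_fun_def
  proof (rule cInf_greatest)
    show "{r. 0 < r \<and> w \<in> (\<lambda>p. r *\<^sub>R p) ` \<Omega>} \<noteq> {}"
      using absorbing_if_zero_in_interior[OF assms(1)] by auto
    fix r assume "r \<in> {r. 0 < r \<and> w \<in> (\<lambda>p. r *\<^sub>R p) ` \<Omega>}"
    then obtain p where p: "r > 0" "p \<in> \<Omega>" "w = r *\<^sub>R p" by auto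
    have "norm w = r * norm p" using p by simp
    also have "\<dots> \<le> r * B" using p B by (simp add: mult_left_mono)
    finally show "norm w / B \<le> r" using B by (simp add: divide_le_eq mult.commute)
  qed
  moreover have "norm w / B > 0" using assms(3) B by simp
  ultimately show ?thesis by linarith
qed

lemma minkowski_fun_scaleR:
  assumes "(0::real\<times>real) \<in> interior \<Omega>" "c > 0"
  shows "minkowski_fun \<Omega> (c *\<^sub>R w) = c * minkowski_fun \<Omega> w"
proof -
  define A where "A = {r. 0 < r \<and> w \<in> (\<lambda>p. r *\<^sub>R p) ` \<Omega>}"
  have "{r. 0 < r \<and> c *\<^sub>R w \<in> (\<lambda>p. r *\<^sub>R p) ` \<Omega>} = (*) c ` A"
  proof (intro set_eqI iffI)
    fix r assume "r \<in> {r. 0 < r \<and> c *\<^sub>R w \<in> (\<lambda>p. r *\<^sub>R p) ` \<Omega>}"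
    then obtain p where p: "r > 0" "p \<in> \<Omega>" "c *\<^sub>R w = r *\<^sub>R p" by auto
    have "w = (1/c) *\<^sub>R (c *\<^sub>R w)" using assms(2) by simp
    also have "\<dots> = (r/c) *\<^sub>R p" using p(3) by simp
    finally have "w = (r/c) *\<^sub>R p" .
    then have "r/c \<in> A" using p assms(2) by (auto simp: A_def)
    then show "r \<in> (*) c ` A" using assms(2) by (auto intro!: image_eqI[where x="r/c"])
  next
    fix r assume "r \<in> (*) c ` A"
    then obtain u p where "r = c * u" "u > 0" "p \<in> \<Omega>" "w = u *\<^sub>R p" by (auto simp: A_def)
    then show "r \<in> {r. 0 < r \<and> c *\<^sub>R w \<in> (\<lambda>p. r *\<^sub>R p) ` \<Omega>}" using assms(2) by auto
  qed
  moreover have "c * Inf A = (INF r\<in>A. c * r)"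
  proof (rule continuous_at_Inf_mono)
    show "mono ((*) c)" using assms(2) by (simp add: mono_def)
    show "A \<noteq> {}" using absorbing_if_zero_in_interior[OF assms(1)] by (auto simp: A_def)
    show "bdd_below A" by (auto simp: A_def intro!: bdd_belowI[where m=0])
  qed (intro continuous_intros)
  ultimately show ?thesis unfolding minkowski_fun_def A_def by simp
qed

lemma support_fun_eq_zero_imp_zero:
  assumes "bounded \<Omega>" "(0::real\<times>real) \<in> interior \<Omega>" "support_fun \<Omega> v = 0"
  shows "v = 0"
proof (rule ccontr)
  assume v: "v \<noteq> 0"
  obtain e where e: "e > 0" "cball 0 e \<subseteq> \<Omega>" using assms(2) mem_interior_cball by blast
  define p where "p = (e / norm v) *\<^sub>R v"
  have "p \<in> \<Omega>" using v e by (auto simp: p_def)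
  moreover have "bdd_above ((\<lambda>p. v \<bullet> p) ` \<Omega>)"
    by (intro bounded_imp_bdd_above bounded_linear_image assms(1) bounded_linear_inner_right)
  ultimately have "v \<bullet> p \<le> support_fun \<Omega> v"
    unfolding support_fun_def by (rule cSUP_upper)
  moreover have "v \<bullet> p = e * norm v"
    by (simp add: p_def dot_square_norm power2_eq_square)
  moreover have "0 < e * norm v" using e v by simp
  ultimately show False using assms(3) by simp
qed

definition gauge_vector :: "('n \<Rightarrow> (real \<times> real) set) \<Rightarrow> real^'n \<Rightarrow> real^'n \<Rightarrow> real^'n"
  where "gauge_vector \<Omega> a b = (\<chi> j. minkowski_fun (\<Omega> j) (a $ j, b $ j))"

lemma control_set_iff: "(a, b) \<in> control_set \<Omega> \<mu> \<longleftrightarrow> \<mu> (gauge_vector \<Omega> a b) \<le> 1"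
  by (simp add: control_set_def gauge_vector_def)

lemma gauge_vector_in_nonneg_orthant:
  assumes "\<And>j. (0::real\<times>real) \<in> interior (\<Omega> j)"
  shows "gauge_vector \<Omega> a b \<in> nonneg_orthant"
  by (simp add: nonneg_orthant_def gauge_vector_def minkowski_fun_nonneg[OF assms])

lemma gauge_vector_scaleR:
  assumes "\<And>j. (0::real\<times>real) \<in> interior (\<Omega> j)" "c > 0"
  shows "gauge_vector \<Omega> (c *\<^sub>R a) (c *\<^sub>R b) = c *\<^sub>R gauge_vector \<Omega> a b"
proof -
  have "minkowski_fun (\<Omega> j) (c * a $ j, c * b $ j) = c * minkowski_fun (\<Omega> j) (a $ j, b $ j)" for j
    using minkowski_fun_scaleR[OF assms(1) assms(2), of j "(a $ j, b $ j)"] by simp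
  then show ?thesis by (simp add: gauge_vector_def vec_eq_iff)
qed

lemma gauge_vector_nth_eq_0_iff:
  assumes "(0::real\<times>real) \<in> interior (\<Omega> j)" "bounded (\<Omega> j)"
  shows "gauge_vector \<Omega> a b $ j = 0 \<longleftrightarrow> a $ j = 0 \<and> b $ j = 0"
  using minkowski_fun_pos[OF assms, of "(a $ j, b $ j)"] minkowski_fun_zero[OF assms(1)]
  by (cases "a $ j = 0 \<and> b $ j = 0") (auto simp: gauge_vector_def zero_prod_def)

lemma control_set_pairing_pos:
  assumes MA: "main_assumption \<Omega> \<mu>" and pq: "p \<noteq> 0 \<or> q \<noteq> 0"
  shows "\<exists>(a, b)\<in>control_set \<Omega> \<mu>. 0 < p \<bullet> a + q \<bullet> b"
proof -
  have int0: "\<And>j. (0::real\<times>real) \<in> interior (\<Omega> j)"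
    and hom: "\<And>l t. l \<in> nonneg_orthant \<Longrightarrow> t \<ge> 0 \<Longrightarrow> \<mu> (t *\<^sub>R l) = t * \<mu> l"
    and nonneg: "\<And>l. l \<in> nonneg_orthant \<Longrightarrow> 0 \<le> \<mu> l"
    using MA by (auto simp: main_assumption_def)
  define m where "m = \<mu> (gauge_vector \<Omega> p q)"
  define \<epsilon> where "\<epsilon> = 1 / (1 + m)"
  have m: "0 \<le> m" unfolding m_def by (intro nonneg gauge_vector_in_nonneg_orthant int0)
  then have \<epsilon>: "0 < \<epsilon>" by (simp add: \<epsilon>_def)
  have "\<mu> (gauge_vector \<Omega> (\<epsilon> *\<^sub>R p) (\<epsilon> *\<^sub>R q)) = \<epsilon> * m"
    using \<epsilon> by (simp add: gauge_vector_scaleR[OF int0] hom gauge_vector_in_nonneg_orthant[OF int0] m_def)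
  also have "\<dots> \<le> 1" using m by (simp add: \<epsilon>_def)
  finally have "(\<epsilon> *\<^sub>R p, \<epsilon> *\<^sub>R q) \<in> control_set \<Omega> \<mu>" by (simp add: control_set_iff)
  moreover have "0 < p \<bullet> (\<epsilon> *\<^sub>R p) + q \<bullet> (\<epsilon> *\<^sub>R q)"
    using pq \<epsilon> by (auto simp: add_pos_nonneg add_nonneg_pos)
  ultimately show ?thesis by blast
qed

text \<open>A control realising a positive maximum of a linear functional lies on the boundary
  \<open>\<mu> = 1\<close> of the gauge ball: otherwise rescaling it outwards increases the functional.\<close>

lemma control_set_maximizer_gauge_ge_1:
  assumes MA: "main_assumption \<Omega> \<mu>"
    and max: "\<forall>(a, b)\<in>control_set \<Omega> \<mu>. p \<bullet> a + q \<bullet> b \<le> v"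
    and "0 < v" and val: "p \<bullet> a0 + q \<bullet> b0 = v"
  shows "1 \<le> \<mu> (gauge_vector \<Omega> a0 b0)"
proof (rule ccontr)
  assume lt: "\<not> 1 \<le> \<mu> (gauge_vector \<Omega> a0 b0)"
  have int0: "\<And>j. (0::real\<times>real) \<in> interior (\<Omega> j)"
    and bnd: "\<And>j. bounded (\<Omega> j)"
    and hom: "\<And>l t. l \<in> nonneg_orthant \<Longrightarrow> t \<ge> 0 \<Longrightarrow> \<mu> (t *\<^sub>R l) = t * \<mu> l"
    and pos: "\<And>l. l \<in> nonneg_orthant \<Longrightarrow> l \<noteq> 0 \<Longrightarrow> 0 < \<mu> l"
    using MA by (auto simp: main_assumption_def compact_imp_bounded)
  let ?g = "gauge_vector \<Omega> a0 b0"
  have g: "?g \<in> nonneg_orthant" by (rule gauge_vector_in_nonneg_orthant[OF int0])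
  show False
  proof (cases "?g = 0")
    case True
    then have "a0 = 0" "b0 = 0"
      using gauge_vector_nth_eq_0_iff[of \<Omega>] int0 bnd by (simp_all add: vec_eq_iff)
    then show False using val \<open>0 < v\<close> by simp
  next
    case False
    define s where "s = 1 / \<mu> ?g"
    have "0 < \<mu> ?g" using pos[OF g False] .
    then have s: "1 < s" using lt by (simp add: s_def)
    have "\<mu> (gauge_vector \<Omega> (s *\<^sub>R a0) (s *\<^sub>R b0)) = 1"
      using s \<open>0 < \<mu> ?g\<close> by (simp add: gauge_vector_scaleR[OF int0] hom[OF g] s_def)
    then have "(s *\<^sub>R a0, s *\<^sub>R b0) \<in> control_set \<Omega> \<mu>" by (simp add: control_set_iff)
    then have "p \<bullet> (s *\<^sub>R a0) + q \<bullet> (s *\<^sub>R b0) \<le> v" using max by blast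
    then have "s * v \<le> v" by (simp flip: val add: distrib_left)
    then show False using s \<open>0 < v\<close> by simp
  qed
qed

lemma control_set_maximizer_nth_zero:
  fixes \<Omega> :: "'n::finite \<Rightarrow> (real \<times> real) set" and \<mu> :: "real^'n \<Rightarrow> real"
  assumes MA: "main_assumption \<Omega> \<mu>"
    and strict: "\<forall>l\<in>nonneg_orthant. \<forall>t>0. \<mu> l < \<mu> (l + t *\<^sub>R axis i 1)"
    and "p $ i = 0" "q $ i = 0" and "p \<noteq> 0 \<or> q \<noteq> 0"
    and ctrl: "(a0, b0) \<in> control_set \<Omega> \<mu>"
    and max: "\<forall>(a, b)\<in>control_set \<Omega> \<mu>. p \<bullet> a + q \<bullet> b \<le> p \<bullet> a0 + q \<bullet> b0"
  shows "a0 $ i = 0 \<and> b0 $ i = 0"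
proof (rule ccontr)
  assume nz: "\<not> (a0 $ i = 0 \<and> b0 $ i = 0)"
  have int0: "\<And>j. (0::real\<times>real) \<in> interior (\<Omega> j)" and bnd: "\<And>j. bounded (\<Omega> j)"
    using MA by (auto simp: main_assumption_def compact_imp_bounded)
  define a' where "a' = a0 - axis i (a0 $ i)"
  define b' where "b' = b0 - axis i (b0 $ i)"
  let ?g = "gauge_vector \<Omega> a0 b0"
  obtain a b where "(a, b) \<in> control_set \<Omega> \<mu>" "0 < p \<bullet> a + q \<bullet> b"
    using control_set_pairing_pos[OF MA \<open>p \<noteq> 0 \<or> q \<noteq> 0\<close>] by blast
  with max have "0 < p \<bullet> a0 + q \<bullet> b0" by fastforce
  moreover have "p \<bullet> a' + q \<bullet> b' = p \<bullet> a0 + q \<bullet> b0"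
    using \<open>p $ i = 0\<close> \<open>q $ i = 0\<close> by (simp add: a'_def b'_def inner_diff_right inner_axis)
  ultimately have "1 \<le> \<mu> (gauge_vector \<Omega> a' b')"
    using control_set_maximizer_gauge_ge_1[OF MA max] by blast
  moreover have "?g = gauge_vector \<Omega> a' b' + (?g $ i) *\<^sub>R axis i 1"
    using minkowski_fun_zero[OF int0]
    by (auto simp: vec_eq_iff gauge_vector_def a'_def b'_def axis_def zero_prod_def)
  moreover have "0 < ?g $ i"
    using nz gauge_vector_nth_eq_0_iff[of \<Omega> i] int0 bnd
      gauge_vector_in_nonneg_orthant[of \<Omega> a0 b0] by (auto simp: nonneg_orthant_def less_le)
  moreover have "gauge_vector \<Omega> a' b' \<in> nonneg_orthant"
    by (rule gauge_vector_in_nonneg_orthant[OF int0])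
  ultimately have "1 < \<mu> ?g"
    using strict by (metis order.strict_trans1)
  then show False using ctrl by (simp add: control_set_iff)
qed

definition pmp_regular_point :: "('n \<Rightarrow> (real \<times> real) set) \<Rightarrow> (real^'n \<Rightarrow> real) \<Rightarrow> real
    \<Rightarrow> (real \<Rightarrow> real^'n) \<Rightarrow> (real \<Rightarrow> real^'n) \<Rightarrow> (real \<Rightarrow> real^'n) \<Rightarrow> (real \<Rightarrow> real^'n)
    \<Rightarrow> real \<Rightarrow> real \<Rightarrow> bool" where
  "pmp_regular_point \<Omega> \<mu> T x y \<phi> \<psi> \<gamma> t \<longleftrightarrow>
     x differentiable (at t within {0..T}) \<and> y differentiable (at t within {0..T}) \<and>
     (vector_derivative x (at t within {0..T}), vector_derivative y (at t within {0..T}))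
       \<in> control_set \<Omega> \<mu> \<and>
     (\<phi> has_vector_derivative (- (\<gamma>/2) *\<^sub>R vector_derivative y (at t within {0..T})))
       (at t within {0..T}) \<and>
     (\<psi> has_vector_derivative ((\<gamma>/2) *\<^sub>R vector_derivative x (at t within {0..T})))
       (at t within {0..T}) \<and>
     (\<forall>(a, b)\<in>control_set \<Omega> \<mu>.
       hamiltonian (\<phi> t) (\<psi> t) \<gamma> (x t) (y t) a b \<le>
       hamiltonian (\<phi> t) (\<psi> t) \<gamma> (x t) (y t)
         (vector_derivative x (at t within {0..T})) (vector_derivative y (at t within {0..T})))"

lemma pmp_solution_ae_regular:
  assumes "pmp_solution \<Omega> \<mu> T x y z \<phi> \<psi> \<gamma>"
  obtains N where "negligible N" "\<And>t. t \<in> {0..T} - N \<Longrightarrow> pmp_regular_point \<Omega> \<mu> T x y \<phi> \<psi> \<gamma> t"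
proof -
  obtain c where "AE t in lebesgue. t \<in> {0..T} \<longrightarrow>
        hamiltonian (\<phi> t) (\<psi> t) \<gamma> (x t) (y t)
           (vector_derivative x (at t within {0..T})) (vector_derivative y (at t within {0..T})) = c \<and>
        (\<forall>(a, b)\<in>control_set \<Omega> \<mu>.
           hamiltonian (\<phi> t) (\<psi> t) \<gamma> (x t) (y t) a b \<le>
           hamiltonian (\<phi> t) (\<psi> t) \<gamma> (x t) (y t)
             (vector_derivative x (at t within {0..T})) (vector_derivative y (at t within {0..T})))"
    using assms unfolding pmp_solution_def by blast
  moreover have "AE t in lebesgue. t \<in> {0..T} \<longrightarrow>
      x differentiable (at t within {0..T}) \<and> y differentiable (at t within {0..T}) \<and>
      (vector_derivative x (at t within {0..T}), vector_derivative y (at t within {0..T}))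
        \<in> control_set \<Omega> \<mu>"
    using assms unfolding pmp_solution_def admissible_def by (auto elim!: AE_mp)
  moreover have "AE t in lebesgue. t \<in> {0..T} \<longrightarrow>
      (\<phi> has_vector_derivative (- (\<gamma>/2) *\<^sub>R vector_derivative y (at t within {0..T})))
        (at t within {0..T}) \<and>
      (\<psi> has_vector_derivative ((\<gamma>/2) *\<^sub>R vector_derivative x (at t within {0..T})))
        (at t within {0..T})"
    using assms unfolding pmp_solution_def by blast
  ultimately have "AE t in lebesgue. t \<in> {0..T} \<longrightarrow> pmp_regular_point \<Omega> \<mu> T x y \<phi> \<psi> \<gamma> t"
    unfolding pmp_regular_point_def by eventually_elim blast
  then obtain N where "negligible N"
      "{t. \<not> (t \<in> {0..T} \<longrightarrow> pmp_regular_point \<Omega> \<mu> T x y \<phi> \<psi> \<gamma> t)} \<subseteq> N"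
    by (auto simp: eventually_ae_filter_negligible)
  then show thesis
    using that by blast
qed

lemma derivative_of_multiple_eq_neg_imp_zero:
  fixes f g :: "real \<Rightarrow> real"
  assumes "a < b" "t \<in> {a..b}"
    and g: "(g has_vector_derivative g') (at t within {a..b})"
    and f: "(f has_vector_derivative - (c * g')) (at t within {a..b})"
    and fg: "\<And>s. s \<in> {a..b} \<Longrightarrow> f s = c * g s"
  shows "c * g' = 0"
proof -
  have "((\<lambda>s. c * g s) has_vector_derivative c * g') (at t within {a..b})"
    using has_vector_derivative_mult_right[OF g] .
  then have "(f has_vector_derivative c * g') (at t within {a..b})"
    by (rule has_vector_derivative_transform_within[where d=1]) (use assms fg in auto)
  then have "- (c * g') = c * g'"
    using vector_derivative_unique_within_closed_interval[unfolded cbox_interval, OF assms(1,2) f]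
    by blast
  then show ?thesis by simp
qed

lemma pmp_regular_point_nth_derivatives_zero:
  fixes \<Omega> :: "'n::finite \<Rightarrow> (real \<times> real) set" and \<mu> :: "real^'n \<Rightarrow> real"
  assumes MA: "main_assumption \<Omega> \<mu>"
    and strict: "\<forall>l\<in>nonneg_orthant. \<forall>t>0. \<mu> l < \<mu> (l + t *\<^sub>R axis i 1)"
    and reg: "pmp_regular_point \<Omega> \<mu> T x y \<phi> \<psi> \<gamma> t" and "0 < t" "t < T"
    and hg: "\<And>s. s \<in> {0..T} \<Longrightarrow> \<phi> s $ i = \<gamma>/2 * y s $ i \<and> \<psi> s $ i = -(\<gamma>/2) * x s $ i"
    and nonvanishing: "\<phi> t \<noteq> 0 \<or> \<psi> t \<noteq> 0 \<or> \<gamma> \<noteq> 0"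
  shows "(x differentiable (at t within {0..T}) \<and> vector_derivative x (at t within {0..T}) $ i = 0) \<and>
    (y differentiable (at t within {0..T}) \<and> vector_derivative y (at t within {0..T}) $ i = 0)"
proof -
  have "vector_derivative x (at t within {0..T}) $ i = 0 \<and>
      vector_derivative y (at t within {0..T}) $ i = 0"
  proof (cases "\<gamma> = 0")
    case True
    have "t \<in> {0..T}" using \<open>0 < t\<close> \<open>t < T\<close> by simp
    show ?thesis
    proof (rule control_set_maximizer_nth_zero[OF MA strict])
      show "\<phi> t $ i = 0" "\<psi> t $ i = 0" using hg[OF \<open>t \<in> {0..T}\<close>] True by auto
      show "\<phi> t \<noteq> 0 \<or> \<psi> t \<noteq> 0" using nonvanishing True by auto
    qed (use reg True in \<open>auto simp: pmp_regular_point_def hamiltonian_def\<close>)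
  next
    case False
    define x' y' where "x' = vector_derivative x (at t within {0..T})"
      and "y' = vector_derivative y (at t within {0..T})"
    have "0 < T" and tT: "t \<in> {0..T}" using \<open>0 < t\<close> \<open>t < T\<close> by auto
    have "(x has_vector_derivative x') (at t within {0..T})"
      and "(y has_vector_derivative y') (at t within {0..T})"
      and "(\<phi> has_vector_derivative - (\<gamma>/2) *\<^sub>R y') (at t within {0..T})"
      and "(\<psi> has_vector_derivative (\<gamma>/2) *\<^sub>R x') (at t within {0..T})"
      using reg by (auto simp: pmp_regular_point_def vector_derivative_works x'_def y'_def)
    note components = this[THEN has_vector_derivative_vec_nth[of _ _ _ i]]
    have "\<gamma>/2 * y' $ i = 0"
      by (rule derivative_of_multiple_eq_neg_imp_zero[where f="\<lambda>s. \<phi> s $ i",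
            OF \<open>0 < T\<close> tT components(2)])
        (use components(3) hg in auto)
    moreover have "-(\<gamma>/2) * x' $ i = 0"
      by (rule derivative_of_multiple_eq_neg_imp_zero[where f="\<lambda>s. \<psi> s $ i",
            OF \<open>0 < T\<close> tT components(1)])
        (use components(4) hg in auto)
    ultimately show ?thesis using False by (simp add: x'_def y'_def)
  qed
  then show ?thesis using reg unfolding pmp_regular_point_def by blast
qed

theorem mainTheorem5:
  fixes \<Omega> :: "'n::finite \<Rightarrow> (real \<times> real) set" and \<mu> :: "real^'n \<Rightarrow> real"
    and T :: real and x y :: "real \<Rightarrow> real^'n" and z :: "real \<Rightarrow> real"
    and \<phi> \<psi> :: "real \<Rightarrow> real^'n" and \<gamma> :: real and i :: 'n
  assumes "main_assumption \<Omega> \<mu>"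
    and "\<forall>l\<in>nonneg_orthant. \<forall>t>0. \<mu> l < \<mu> (l + t *\<^sub>R axis i 1)"
    and "pmp_solution \<Omega> \<mu> T x y z \<phi> \<psi> \<gamma>"
    and "\<forall>t\<in>{0..T}. support_fun (\<Omega> i)
            (\<phi> t $ i - (\<gamma>/2) * y t $ i, \<psi> t $ i + (\<gamma>/2) * x t $ i) = 0"
  shows "\<forall>t\<in>{0..T}. x t $ i = 0 \<and> y t $ i = 0"
proof -
  have "bounded (\<Omega> i)" "(0::real\<times>real) \<in> interior (\<Omega> i)"
    using assms(1) by (auto simp: main_assumption_def compact_imp_bounded)
  then have "(\<phi> t $ i - (\<gamma>/2) * y t $ i, \<psi> t $ i + (\<gamma>/2) * x t $ i) = 0" if "t \<in> {0..T}" for t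
    using support_fun_eq_zero_imp_zero assms(4) that by blast
  then have hg: "\<phi> t $ i = \<gamma>/2 * y t $ i \<and> \<psi> t $ i = -(\<gamma>/2) * x t $ i" if "t \<in> {0..T}" for t
    using that by (simp add: zero_prod_def eq_neg_iff_add_eq_0)
  obtain N where "negligible N"
    and reg: "\<And>t. t \<in> {0..T} - N \<Longrightarrow> pmp_regular_point \<Omega> \<mu> T x y \<phi> \<psi> \<gamma> t"
    using pmp_solution_ae_regular[OF assms(3)] by blast
  then have null: "negligible (N \<union> {0, T})" by simp
  obtain Lx Ly where Lx: "Lx-lipschitz_on {0..T} x" and Ly: "Ly-lipschitz_on {0..T} y"
    and "0 \<le> T" "x 0 = 0" "y 0 = 0"
    and nonvanishing: "\<forall>t\<in>{0..T}. \<phi> t \<noteq> 0 \<or> \<psi> t \<noteq> 0 \<or> \<gamma> \<noteq> 0"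
    using assms(3) by (auto simp: pmp_solution_def admissible_def)
  have "(x differentiable (at t within {0..T}) \<and> vector_derivative x (at t within {0..T}) $ i = 0) \<and>
      (y differentiable (at t within {0..T}) \<and> vector_derivative y (at t within {0..T}) $ i = 0)"
    if "t \<in> {0..T} - (N \<union> {0, T})" for t
    using that nonvanishing
    by (intro pmp_regular_point_nth_derivatives_zero[OF assms(1,2) reg _ _ hg]) auto
  then have "x t $ i = x 0 $ i \<and> y t $ i = y 0 $ i" if "t \<in> {0..T}" for t
    using lipschitz_component_zero_derivative_ae_imp_constant[OF Lx connected_Icc null _ that]
      lipschitz_component_zero_derivative_ae_imp_constant[OF Ly connected_Icc null _ that]
      \<open>0 \<le> T\<close> by auto
  then show ?thesis using \<open>x 0 = 0\<close> \<open>y 0 = 0\<close> by simp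
qed

end
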